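(* Let $E$ be a set of equivariance equations (equations $t\approx s$ between nominal terms) of total size $n$ and let $\nabla$ be a freshness context of size $m$. Then the algorithm $\mathfrak E$, run on $E;\nabla;\mathrm{Atoms}(E);\mathit{Id}$ until no rule applies, has $O(n^2+m)$ time complexity, assuming permutations are represented by a pair of hash tables (for the permutation and its inverse) and membership in the atom set and in $\nabla$ by hash tables, all with constant-time lookup and update.
   Context: Nominal terms $t::=f(t_1,\dots,t_n)\mid a\mid a.t\mid \pi\cdot X$ over sorted atoms, variables and function symbols; $\pi$ is a permutation (finite sequence of swappings $(a\,b)$ of same-sorted atoms; $\mathit{Id}$ the empty one); $\pi\bullet t$ is the swapping action ($(a\,b)$ exchanges $a,b$ everywhere, $(a\,b)\bullet(\pi\cdot X)=((a\,b)\pi)\cdot X$, sequences act right to left). The size of a term is the number of occurrences of atoms, variables and function symbols in it (the size of $E$ is the sum over its equations); $\mathrm{Atoms}(E)$ is the set of atoms occurring in $E$. A freshness context is a finite set of constraints $a\# X$. Algorithm $\mathfrak E$ works on states $E;\nabla;A;\pi$ with rules ($\uplus$ disjoint union): Dec-E: $\{f(t_1,..,t_m)\approx f(s_1,..,s_m)\}\uplus E;\nabla;A;\mathit{Id}\Rightarrow\{t_1\approx s_1,..,t_m\approx s_m\}\cup E;\nabla;A;\mathit{Id}$. Alp-E: $\{a.t\approx b.s\}\uplus E;\nabla;A;\mathit{Id}\Rightarrow\{(\bar c\,a)\bullet t\approx(\bar c\,b)\bullet s\}\cup E;\nabla;A;\mathit{Id}$, $\bar c$ a fresh atom (not in $A$,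 not occurring so far) of the sort of $a,b$. Sus-E: $\{\pi_1\cdot X\approx\pi_2\cdot X\}\uplus E;\nabla;A;\mathit{Id}\Rightarrow\{\pi_1\bullet a\approx\pi_2\bullet a\mid a\in A,\ a\# X\notin\nabla\}\cup E;\nabla;A;\mathit{Id}$. Rem-E: $\{a\approx b\}\uplus E;\nabla;A;\pi\Rightarrow E;\nabla;A\setminus\{b\};\pi$, for atoms with $\pi\bullet a=b$. Sol-E: $\{a\approx b\}\uplus E;\nabla;A;\pi\Rightarrow E;\nabla;A\setminus\{b\};(\pi\bullet a\;\,b)\pi$, for atoms with $\pi\bullet a\in A$, $b\in A$, $\pi\bullet a\neq b$. *)

theory Defs
  imports "HOL-Library.Multiset"
begin

text \<open>Sorted atoms: an atom carries its sort and an index; every sort has infinitely many atoms.\<close>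
datatype atom = Atom (asort: nat) nat

type_synonym swapping = "atom \<times> atom"
type_synonym perm = "swapping list"   \<comment> \<open>Id is the empty list\<close>

datatype nterm =
    Fn nat "nterm list"
  | At atom
  | Ab atom nterm
  | Su perm nat                \<comment> \<open>pi . X\<close>

type_synonym eqn = "nterm \<times> nterm"
type_synonym fctx = "(atom \<times> nat) set"   \<comment> \<open>(a,X) stands for a # X\<close>

definition swap_atom :: "swapping \<Rightarrow> atom \<Rightarrow> atom" where
  "swap_atom s c = (if c = fst s then snd s else if c = snd s then fst s else c)"

text \<open>Sequences of swappings act right to left.\<close>
definition perm_atom :: "perm \<Rightarrow> atom \<Rightarrow> atom" where
  "perm_atom \<pi> c = foldr swap_atom \<pi> c"

fun swap_term :: "swapping \<Rightarrow> nterm \<Rightarrow> nterm" where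
  "swap_term s (Fn f ts) = Fn f (map (swap_term s) ts)"
| "swap_term s (At a) = At (swap_atom s a)"
| "swap_term s (Ab a t) = Ab (swap_atom s a) (swap_term s t)"
| "swap_term s (Su \<pi> X) = Su (s # \<pi>) X"

fun tsize :: "nterm \<Rightarrow> nat" where
  "tsize (Fn f ts) = 1 + sum_list (map tsize ts)"
| "tsize (At a) = 1"
| "tsize (Ab a t) = 1 + tsize t"
| "tsize (Su \<pi> X) = 1 + 2 * length \<pi>"

definition esize :: "eqn multiset \<Rightarrow> nat" where
  "esize E = (\<Sum>(t, s)\<in>#E. tsize t + tsize s)"

fun tatoms :: "nterm \<Rightarrow> atom set" where
  "tatoms (Fn f ts) = \<Union> (set (map tatoms ts))"
| "tatoms (At a) = {a}"
| "tatoms (Ab a t) = insert a (tatoms t)"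
| "tatoms (Su \<pi> X) = fst ` set \<pi> \<union> snd ` set \<pi>"

definition eatoms :: "eqn multiset \<Rightarrow> atom set" where
  "eatoms E = (\<Union>(t, s)\<in>set_mset E. tatoms t \<union> tatoms s)"

text \<open>Number of nodes a traversal of a term visits; a suspension is a single
  node since its permutation is a pair of hash tables updated in O(1).\<close>
fun tnodes :: "nterm \<Rightarrow> nat" where
  "tnodes (Fn f ts) = 1 + sum_list (map tnodes ts)"
| "tnodes (At a) = 1"
| "tnodes (Ab a t) = 1 + tnodes t"
| "tnodes (Su \<pi> X) = 1"

type_synonym state = "eqn multiset \<times> fctx \<times> atom set \<times> perm"

definition state_atoms :: "state \<Rightarrow> atom set" where
  "state_atoms st = (case st of (E, N, A, \<pi>) \<Rightarrow>
      eatoms E \<union> fst ` N \<union> A \<union> fst ` set \<pi> \<union> snd ` set \<pi>)"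

text \<open>step st c st': one rule application from st to st' with cost c.\<close>
inductive step :: "state \<Rightarrow> nat \<Rightarrow> state \<Rightarrow> bool" where
  DecE: "length ts = length ss \<Longrightarrow>
     step (add_mset (Fn f ts, Fn f ss) E, N, A, [])
          (length ts + 1)
          (mset (zip ts ss) + E, N, A, [])"
| AlpE: "asort a = asort b \<Longrightarrow> asort c = asort a \<Longrightarrow> c \<notin> A \<Longrightarrow>
     c \<notin> state_atoms (add_mset (Ab a t, Ab b s) E, N, A, []) \<Longrightarrow>
     step (add_mset (Ab a t, Ab b s) E, N, A, [])
          (tnodes t + tnodes s + 1)
          (add_mset (swap_term (c, a) t, swap_term (c, b) s) E, N, A, [])"
| SusE: "step (add_mset (Su \<pi>1 X, Su \<pi>2 X) E, N, A, [])
          (card A + 1)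
          (image_mset (\<lambda>a. (At (perm_atom \<pi>1 a), At (perm_atom \<pi>2 a)))
              (mset_set {a \<in> A. (a, X) \<notin> N}) + E, N, A, [])"
| RemE: "perm_atom \<pi> a = b \<Longrightarrow>
     step (add_mset (At a, At b) E, N, A, \<pi>) 1 (E, N, A - {b}, \<pi>)"
| SolE: "perm_atom \<pi> a \<in> A \<Longrightarrow> b \<in> A \<Longrightarrow> perm_atom \<pi> a \<noteq> b \<Longrightarrow>
     step (add_mset (At a, At b) E, N, A, \<pi>) 1
          (E, N, A - {b}, (perm_atom \<pi> a, b) # \<pi>)"

inductive runs :: "state \<Rightarrow> nat \<Rightarrow> state \<Rightarrow> bool" where
  refl: "runs st 0 st"
| cons: "step st c st' \<Longrightarrow> runs st' k st'' \<Longrightarrow> runs st (c + k) st''"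

definition final :: "state \<Rightarrow> bool" where
  "final st \<longleftrightarrow> (\<nexists>c st'. step st c st')"

text \<open>Total cost of running E from the initial state: building the hash tables for
  Atoms(E) and Nabla (cost n + m) plus the costs of the rule applications.\<close>
definition init_cost :: "eqn multiset \<Rightarrow> fctx \<Rightarrow> nat" where
  "init_cost E N = esize E + card N"

end

theory Submission
  imports Defs
begin

text \<open>Amortised analysis with a potential on the equation multiset. With \<open>K\<close> an upper
  bound on the size of the atom set, which never grows, a term node \<open>f(t\<^sub>1,\<dots>,t\<^sub>m)\<close>
  carries \<open>m + 1\<close> (the cost of Dec-E), an abstraction \<open>a.t\<close> carries the number of nodes
  of \<open>t\<close> (the cost of the renaming in Alp-E, which does not change node counts or
  potentials), and a suspension carries \<open>2K + 1\<close>, enough to pay for Sus-E and for the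
  atom equations it creates, each of which pays for its own Rem-E or Sol-E.
  Every rule application costs at most the drop in potential. Since \<open>K = |Atoms(E)| \<le> n\<close>,
  the initial potential is at most \<open>n\<^sup>2 + (2n + 2) n\<close>, so the total cost is \<open>O(n\<^sup>2 + m)\<close>.\<close>

fun tpotential :: "nat \<Rightarrow> nterm \<Rightarrow> nat" where
  "tpotential K (Fn f ts) = 1 + length ts + sum_list (map (tpotential K) ts)"
| "tpotential K (At a) = 1"
| "tpotential K (Ab a t) = 1 + tnodes t + tpotential K t"
| "tpotential K (Su \<pi> X) = 2 * K + 1"

definition epotential :: "nat \<Rightarrow> eqn multiset \<Rightarrow> nat" where
  "epotential K E = (\<Sum>(t, s)\<in>#E. tpotential K t + tpotential K s)"

lemma epotential_add_mset [simp]: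
  "epotential K (add_mset (t, s) E) = tpotential K t + tpotential K s + epotential K E"
  by (simp add: epotential_def)

lemma epotential_union [simp]: "epotential K (E + E') = epotential K E + epotential K E'"
  by (simp add: epotential_def)

lemma epotential_mset_zip:
  "length ts = length ss \<Longrightarrow>
   epotential K (mset (zip ts ss)) = sum_list (map (tpotential K) ts) + sum_list (map (tpotential K) ss)"
  by (induction ts ss rule: list_induct2) (auto simp: epotential_def)

lemma epotential_atom_eqns:
  "epotential K (image_mset (\<lambda>a. (At (f a), At (g a))) M) = 2 * size M"
  by (induction M) (auto simp: epotential_def)

lemma tnodes_swap_term [simp]: "tnodes (swap_term x t) = tnodes t"
  by (induction x t rule: swap_term.induct) (simp_all add: comp_def cong: map_cong)

lemma tpotential_swap_term [simp]: "tpotential K (swap_term x t) = tpotential K t"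
  by (induction x t rule: swap_term.induct) (simp_all add: comp_def cong: map_cong)

lemma step_epotential_decrease:
  assumes "step (E, N, A, \<pi>) c st'" and "finite A" and "card A \<le> K"
  obtains E' N' A' \<pi>' where "st' = (E', N', A', \<pi>')" and "A' \<subseteq> A"
    and "c + epotential K E' \<le> epotential K E"
  using assms
proof (induction "(E, N, A, \<pi>)" c st' arbitrary: E N A \<pi> rule: step.induct)
  case (SusE \<pi>1 X \<pi>2 E N A)
  have "card {a \<in> A. (a, X) \<notin> N} \<le> card A"
    using SusE.prems by (intro card_mono) auto
  with SusE show ?case by (auto simp: epotential_atom_eqns)
qed (auto simp: epotential_mset_zip)

lemma runs_cost_le_epotential:
  assumes "runs (E, N, A, \<pi>) k st" and "finite A" and "card A \<le> K"
  shows "k \<le> epotential K E"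
  using assms
proof (induction "(E, N, A, \<pi>)" k st arbitrary: E N A \<pi> rule: runs.induct)
  case (cons c st' k st'')
  obtain E' N' A' \<pi>' where st': "st' = (E', N', A', \<pi>')" and "A' \<subseteq> A"
    and decrease: "c + epotential K E' \<le> epotential K E"
    using step_epotential_decrease[OF cons.hyps(1) cons.prems] .
  then have "finite A'" and "card A' \<le> K"
    using cons.prems card_mono[of A A'] finite_subset[of A' A] by auto
  then have "k \<le> epotential K E'"
    by (rule cons.hyps(3)[OF st'])
  with decrease show ?case by simp
qed simp

lemma tsize_ge_1: "1 \<le> tsize t"
  by (cases t) auto

lemma length_le_sum_tsize: "length ts \<le> sum_list (map tsize ts)"
proof (induction ts)
  case (Cons t ts)
  then show ?case using tsize_ge_1[of t] by simp
qed simp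

lemma tnodes_le_tsize: "tnodes t \<le> tsize t"
  by (induction t rule: tnodes.induct) (auto intro: sum_list_mono)

lemma sum_list_squares_le: "sum_list (map (\<lambda>x. (f x :: nat)\<^sup>2) xs) \<le> (sum_list (map f xs))\<^sup>2"
  by (induction xs) (auto simp: power2_eq_square algebra_simps)

lemma sum_mset_squares_le: "(\<Sum>x\<in>#M. (f x :: nat)\<^sup>2) \<le> (\<Sum>x\<in>#M. f x)\<^sup>2"
  by (induction M) (auto simp: power2_eq_square algebra_simps)

lemma tpotential_le: "tpotential K t \<le> (tsize t)\<^sup>2 + (2 * K + 2) * tsize t"
proof (induction t)
  case (Fn f ts)
  let ?S = "sum_list (map tsize ts)"
  have "sum_list (map (tpotential K) ts) \<le> sum_list (map (\<lambda>x. (tsize x)\<^sup>2 + (2 * K + 2) * tsize x) ts)"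
    using Fn by (intro sum_list_mono) auto
  also have "\<dots> = sum_list (map (\<lambda>x. (tsize x)\<^sup>2) ts) + (2 * K + 2) * ?S"
    by (simp add: sum_list_addf sum_list_const_mult)
  also have "\<dots> \<le> ?S\<^sup>2 + (2 * K + 2) * ?S"
    using sum_list_squares_le[of tsize ts] by simp
  finally have "tpotential K (Fn f ts) \<le> 1 + ?S + ?S\<^sup>2 + (2 * K + 2) * ?S"
    using length_le_sum_tsize[of ts] by simp
  also have "\<dots> \<le> (1 + ?S)\<^sup>2 + (2 * K + 2) * (1 + ?S)"
    by (simp add: power2_eq_square algebra_simps)
  finally show ?case by simp
next
  case (Ab a t)
  then show ?case
    using tnodes_le_tsize[of t] by (simp add: power2_eq_square algebra_simps)
qed (auto simp: power2_eq_square algebra_simps)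

lemma epotential_le: "epotential K E \<le> (esize E)\<^sup>2 + (2 * K + 2) * esize E"
proof -
  define q where "q = (\<lambda>(t :: nterm, s :: nterm). tsize t + tsize s)"
  have "epotential K E \<le> (\<Sum>e\<in>#E. (q e)\<^sup>2 + (2 * K + 2) * q e)"
    unfolding epotential_def
  proof (rule sum_mset_mono, clarify)
    fix t s
    have "tpotential K t + tpotential K s
        \<le> (tsize t)\<^sup>2 + (2 * K + 2) * tsize t + ((tsize s)\<^sup>2 + (2 * K + 2) * tsize s)"
      using tpotential_le[of K t] tpotential_le[of K s] by simp
    also have "\<dots> \<le> (q (t, s))\<^sup>2 + (2 * K + 2) * q (t, s)"
      by (simp add: q_def power2_eq_square algebra_simps)
    finally show "tpotential K t + tpotential K s \<le> (q (t, s))\<^sup>2 + (2 * K + 2) * q (t, s)" .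
  qed
  also have "\<dots> = (\<Sum>e\<in>#E. (q e)\<^sup>2) + (2 * K + 2) * (\<Sum>e\<in>#E. q e)"
    by (simp add: sum_mset.distrib sum_mset_distrib_left)
  also have "\<dots> \<le> (\<Sum>e\<in>#E. q e)\<^sup>2 + (2 * K + 2) * (\<Sum>e\<in>#E. q e)"
    using sum_mset_squares_le[of q E] by simp
  finally show ?thesis by (simp add: esize_def q_def)
qed

lemma finite_tatoms: "finite (tatoms t)"
  by (induction t) auto

lemma card_tatoms_le_tsize: "card (tatoms t) \<le> tsize t"
proof (induction t)
  case (Fn f ts)
  have "card (\<Union> (set (map tatoms ts))) \<le> sum_list (map tsize ts)"
    using Fn
  proof (induction ts)
    case (Cons x ts)
    then show ?case
      using card_Un_le[of "tatoms x" "\<Union> (set (map tatoms ts))"] by fastforce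
  qed simp
  then show ?case by simp
next
  case (Ab a t)
  then show ?case by (simp add: card_insert_if finite_tatoms)
next
  case (Su \<pi> X)
  have "card (fst ` set \<pi> \<union> snd ` set \<pi>) \<le> card (fst ` set \<pi>) + card (snd ` set \<pi>)"
    by (rule card_Un_le)
  also have "\<dots> \<le> length \<pi> + length \<pi>"
    using card_image_le[of "set \<pi>" fst] card_image_le[of "set \<pi>" snd] card_length[of \<pi>]
    by simp
  finally show ?case by simp
qed simp

lemma finite_eatoms: "finite (eatoms E)"
  by (auto simp: eatoms_def finite_tatoms)

lemma card_eatoms_le_esize: "card (eatoms E) \<le> esize E"
proof (induction E)
  case empty
  then show ?case by (simp add: eatoms_def)
next
  case (add e E)
  obtain t s where e: "e = (t, s)" by force
  have "eatoms (add_mset e E) = tatoms t \<union> tatoms s \<union> eatoms E"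
    by (auto simp: eatoms_def e)
  then have "card (eatoms (add_mset e E)) \<le> card (tatoms t) + card (tatoms s) + card (eatoms E)"
    by (metis add_le_mono card_Un_le le_trans order_refl)
  then show ?case
    using add card_tatoms_le_tsize[of t] card_tatoms_le_tsize[of s] by (simp add: esize_def e)
qed

theorem theorem8:
  "\<exists>C::nat. \<forall>(E::eqn multiset) (N::fctx) k st.
     finite N \<longrightarrow> runs (E, N, eatoms E, []) k st \<longrightarrow>
     init_cost E N + k \<le> C * ((esize E)\<^sup>2 + card N + 1)"
proof (intro exI allI impI)
  fix E :: "eqn multiset" and N :: fctx and k st
  assume "finite N" and run: "runs (E, N, eatoms E, []) k st"
  let ?n = "esize E"
  have "k \<le> epotential ?n E"
    using runs_cost_le_epotential[OF run finite_eatoms card_eatoms_le_esize] .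
  also have "\<dots> \<le> ?n\<^sup>2 + (2 * ?n + 2) * ?n"
    by (rule epotential_le)
  finally have "k \<le> 3 * ?n\<^sup>2 + 2 * ?n"
    by (simp add: power2_eq_square algebra_simps)
  moreover have "?n \<le> ?n\<^sup>2"
    by (cases ?n) (auto simp: power2_eq_square)
  ultimately show "init_cost E N + k \<le> 6 * (?n\<^sup>2 + card N + 1)"
    by (simp add: init_cost_def)
qed

end
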